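(* Let $n>1$, $c>0$ and $\rho>0$. Let $(\mathfrak{l},g_\rho^c)$ be the metric Lie algebra described in the context. Then $(\mathfrak{l},g_\rho^c)$ is not a solvsoliton: there are no $\lambda\in\mathbb{R}$ and derivation $D$ of $\mathfrak{l}$ such that the Ricci endomorphism of the left-invariant metric defined by $g_\rho^c$ on the simply connected Lie group with Lie algebra $\mathfrak{l}$ equals $\lambda\,\mathrm{Id}+D$.
   Context: Fix $n\ge 2$, $\rho>0$, $c\ge 0$. The real Lie algebra $\mathfrak{l}$ has basis $B_a^R,B_a^I$ ($a=1,\dots,n-1$), $e_k,f_k$ ($k=0,\dots,n-1$), $Z$. Its brackets are as follows (all brackets of basis elements not listed, up to antisymmetry, are zero). On $\mathfrak{b}=\mathrm{span}\{B_a^R,B_a^I\}$: $[B_1^R,B_1^I]=2B_1^I$, and for $a\in\{2,\dots,n-1\}$: $[B_1^R,B_a^R]=B_a^R$, $[B_1^R,B_a^I]=B_a^I$, $[B_a^R,B_a^I]=\tfrac12 B_1^I$. On $\mathfrak{heis}_{2n+1}=\mathrm{span}\{e_k,f_k,Z\}$: $[e_0,f_0]=Z$, $[e_a,f_a]=-Z$ for $a\ge 1$. Also $[\mathfrak{b},Z]=0$. The mixed brackets are described after complex-bilinear extension, with $E_k:=e_k-if_k$ and $[B,\bar E_k]=\overline{[B,E_k]}$ for $B\in\mathfrak{b}$ real: for $k=0,\dots,n-1$ and $a\in\{2,\dots,n-1\}$, $[B_1^R,E_k]=-\delta_{k0}E_1-\delta_{k1}E_0$, $[B_a^R,E_k]=-\tfrac12(\delta_{k0}+\delta_{k1})E_a-\tfrac12\delta_{ka}(E_0-E_1)$,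 $[B_1^I,E_k]=-i(\delta_{k0}+\delta_{k1})(E_0-E_1)$, $[B_a^I,E_k]=\tfrac{i}{2}(\delta_{k0}+\delta_{k1})E_a-\tfrac{i}{2}\delta_{ka}(E_0-E_1)$. The inner product $g_\rho^c$ on $\mathfrak{l}$ is given by $g(B_1^R,B_1^R)=\frac{\rho+c}{\rho}$, $g(B_1^I,B_1^I)=\frac{(\rho+c)^3}{\rho^2(\rho+2c)}$, $g(B_a^R,B_a^R)=g(B_a^I,B_a^I)=\frac{\rho+c}{4\rho}$ ($a\ge2$), $g(e_0,e_0)=g(f_0,f_0)=\frac{\rho+2c}{4\rho^2}$, $g(e_a,e_a)=g(f_a,f_a)=\frac{1}{4\rho}$ ($a\ge1$), $g(Z,Z)=\frac{\rho+c}{4\rho^2(\rho+2c)}$, $g(B_1^I,Z)=-\frac{c(\rho+c)}{2\rho^2(\rho+2c)}$, and all other pairs of distinct basis vectors orthogonal. This is the left-invariant metric on the group $L$ with Lie algebra $\mathfrak{l}$ corresponding to the metric induced on the level sets (orbits of a cohomogeneity one action) of the one-loop deformation with parameter $c$ of the quaternionic Kähler symmetric space $\mathrm{SU}(n,2)/\mathrm{S}(\mathrm{U}(n)\times\mathrm{U}(2))$. A left-invariant metric on a simply connected solvable Lie group is a solvsoliton if $\mathrm{ric}=\lambda\mathrm{Id}+D$ with $\lambda\in\mathbb{R}$ and $D$ a derivation of the Lie algebra. *)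

theory Defs
  imports Complex_Main
begin

text \<open>A finite-dimensional real Lie algebra with basis indexed by a finite set S
 (elements of type 'b); vectors are coordinate functions 'b => real (only coordinates
 in S matter). C i j k is the coefficient of basis vector k in [b_i, b_j];
 G i j is the Gram matrix of the inner product.\<close>

definition bvec :: "'b \<Rightarrow> 'b \<Rightarrow> real" where
  "bvec i = (\<lambda>k. if k = i then 1 else 0)"

definition vbr :: "'b set \<Rightarrow> ('b \<Rightarrow> 'b \<Rightarrow> 'b \<Rightarrow> real) \<Rightarrow> ('b \<Rightarrow> real) \<Rightarrow> ('b \<Rightarrow> real) \<Rightarrow> ('b \<Rightarrow> real)" where
  "vbr S C v w = (\<lambda>k. if k \<in> S then (\<Sum>i\<in>S. \<Sum>j\<in>S. v i * w j * C i j k) else 0)"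

definition ginner :: "'b set \<Rightarrow> ('b \<Rightarrow> 'b \<Rightarrow> real) \<Rightarrow> ('b \<Rightarrow> real) \<Rightarrow> ('b \<Rightarrow> real) \<Rightarrow> real" where
  "ginner S G v w = (\<Sum>i\<in>S. \<Sum>j\<in>S. v i * G i j * w j)"

text \<open>Levi-Civita connection on left-invariant vector fields (Koszul formula):
 2 g(nabla_X Y, Z) = g([X,Y],Z) - g([Y,Z],X) + g([Z,X],Y).\<close>
definition lc :: "'b set \<Rightarrow> ('b \<Rightarrow> 'b \<Rightarrow> 'b \<Rightarrow> real) \<Rightarrow> ('b \<Rightarrow> 'b \<Rightarrow> real) \<Rightarrow> ('b \<Rightarrow> real) \<Rightarrow> ('b \<Rightarrow> real) \<Rightarrow> ('b \<Rightarrow> real)" where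
  "lc S C G X Y = (THE W. (\<forall>k. k \<notin> S \<longrightarrow> W k = 0) \<and>
     (\<forall>Z. 2 * ginner S G W Z = ginner S G (vbr S C X Y) Z - ginner S G (vbr S C Y Z) X
                                 + ginner S G (vbr S C Z X) Y))"

definition curv :: "'b set \<Rightarrow> ('b \<Rightarrow> 'b \<Rightarrow> 'b \<Rightarrow> real) \<Rightarrow> ('b \<Rightarrow> 'b \<Rightarrow> real) \<Rightarrow> ('b \<Rightarrow> real) \<Rightarrow> ('b \<Rightarrow> real) \<Rightarrow> ('b \<Rightarrow> real) \<Rightarrow> ('b \<Rightarrow> real)" where
  "curv S C G X Y Z = (\<lambda>k. lc S C G X (lc S C G Y Z) k - lc S C G Y (lc S C G X Z) k
                          - lc S C G (vbr S C X Y) Z k)"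

definition ricci :: "'b set \<Rightarrow> ('b \<Rightarrow> 'b \<Rightarrow> 'b \<Rightarrow> real) \<Rightarrow> ('b \<Rightarrow> 'b \<Rightarrow> real) \<Rightarrow> ('b \<Rightarrow> real) \<Rightarrow> ('b \<Rightarrow> real) \<Rightarrow> real" where
  "ricci S C G Y Z = (\<Sum>i\<in>S. curv S C G (bvec i) Y Z i)"

definition mapply :: "'b set \<Rightarrow> ('b \<Rightarrow> 'b \<Rightarrow> real) \<Rightarrow> ('b \<Rightarrow> real) \<Rightarrow> ('b \<Rightarrow> real)" where
  "mapply S M v = (\<lambda>k. if k \<in> S then (\<Sum>j\<in>S. M k j * v j) else 0)"

definition is_derivation :: "'b set \<Rightarrow> ('b \<Rightarrow> 'b \<Rightarrow> 'b \<Rightarrow> real) \<Rightarrow> ('b \<Rightarrow> 'b \<Rightarrow> real) \<Rightarrow> bool" where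
  "is_derivation S C M \<longleftrightarrow> (\<forall>X Y. mapply S M (vbr S C X Y) =
      (\<lambda>k. vbr S C (mapply S M X) Y k + vbr S C X (mapply S M Y) k))"

text \<open>Solvsoliton: Ric = lambda Id + D with D a derivation; the Ricci endomorphism Ric is
 defined by g(Ric X, Y) = ric(X, Y), so the condition reads
 ric(X,Y) = lambda g(X,Y) + g(D X, Y) for all X, Y.\<close>
definition solvsoliton :: "'b set \<Rightarrow> ('b \<Rightarrow> 'b \<Rightarrow> 'b \<Rightarrow> real) \<Rightarrow> ('b \<Rightarrow> 'b \<Rightarrow> real) \<Rightarrow> bool" where
  "solvsoliton S C G \<longleftrightarrow> (\<exists>(lam::real) M. is_derivation S C M \<and>
     (\<forall>X Y. ricci S C G X Y = lam * ginner S G X Y + ginner S G (mapply S M X) Y))"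

datatype lb = BR nat | BI nat | Ee nat | Ff nat | Zb

definition lset :: "nat \<Rightarrow> lb set" where
  "lset n = BR ` {1..n-1} \<union> BI ` {1..n-1} \<union> Ee ` {0..n-1} \<union> Ff ` {0..n-1} \<union> {Zb}"

definition dl :: "nat \<Rightarrow> nat \<Rightarrow> complex" where
  "dl x y = (if x = y then 1 else 0)"

text \<open>alpha B k m: coefficient of E_m in [B, E_k] (complexified), E_k = e_k - i f_k.\<close>
fun alpha :: "lb \<Rightarrow> nat \<Rightarrow> nat \<Rightarrow> complex" where
  "alpha (BR a) k m = (if a = 1 then - (dl k 0 * dl m 1 + dl k 1 * dl m 0)
      else - (1/2) * (dl k 0 + dl k 1) * dl m a - (1/2) * dl k a * (dl m 0 - dl m 1))"
| "alpha (BI a) k m = (if a = 1 then - \<i> * (dl k 0 + dl k 1) * (dl m 0 - dl m 1)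
      else (\<i>/2) * (dl k 0 + dl k 1) * dl m a - (\<i>/2) * dl k a * (dl m 0 - dl m 1))"
| "alpha _ k m = 0"

text \<open>Listed brackets (one ordering of each pair). Writing alpha = a + i b,
 [B, e_k] has e_m-component a and f_m-component b, [B, f_k] has e_m-component -b
 and f_m-component a.\<close>
definition lup :: "lb \<Rightarrow> lb \<Rightarrow> lb \<Rightarrow> real" where
  "lup x y t = (case (x, y) of
     (BR a, BR b) \<Rightarrow> (if a = 1 \<and> 2 \<le> b then (if t = BR b then 1 else 0) else 0)
   | (BR a, BI b) \<Rightarrow> (if a = 1 \<and> b = 1 then (if t = BI 1 then 2 else 0)
                     else if a = 1 \<and> 2 \<le> b then (if t = BI b then 1 else 0)
                     else if 2 \<le> a \<and> a = b then (if t = BI 1 then 1/2 else 0)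
                     else 0)
   | (Ee a, Ff b) \<Rightarrow> (if a = b \<and> t = Zb then (if a = 0 then 1 else -1) else 0)
   | (BR _, Ee k) \<Rightarrow> (case t of Ee m \<Rightarrow> Re (alpha x k m) | Ff m \<Rightarrow> Im (alpha x k m) | _ \<Rightarrow> 0)
   | (BI _, Ee k) \<Rightarrow> (case t of Ee m \<Rightarrow> Re (alpha x k m) | Ff m \<Rightarrow> Im (alpha x k m) | _ \<Rightarrow> 0)
   | (BR _, Ff k) \<Rightarrow> (case t of Ee m \<Rightarrow> - Im (alpha x k m) | Ff m \<Rightarrow> Re (alpha x k m) | _ \<Rightarrow> 0)
   | (BI _, Ff k) \<Rightarrow> (case t of Ee m \<Rightarrow> - Im (alpha x k m) | Ff m \<Rightarrow> Re (alpha x k m) | _ \<Rightarrow> 0)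
   | _ \<Rightarrow> 0)"

definition lC :: "lb \<Rightarrow> lb \<Rightarrow> lb \<Rightarrow> real" where
  "lC x y t = lup x y t - lup y x t"

definition lG :: "real \<Rightarrow> real \<Rightarrow> lb \<Rightarrow> lb \<Rightarrow> real" where
  "lG \<rho> c x y = (case (x, y) of
     (BR a, BR b) \<Rightarrow> (if a = b then (if a = 1 then (\<rho> + c) / \<rho> else (\<rho> + c) / (4 * \<rho>)) else 0)
   | (BI a, BI b) \<Rightarrow> (if a = b then (if a = 1 then (\<rho> + c)^3 / (\<rho>^2 * (\<rho> + 2*c))
                                    else (\<rho> + c) / (4 * \<rho>)) else 0)
   | (Ee a, Ee b) \<Rightarrow> (if a = b then (if a = 0 then (\<rho> + 2*c) / (4 * \<rho>^2) else 1 / (4 * \<rho>)) else 0)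
   | (Ff a, Ff b) \<Rightarrow> (if a = b then (if a = 0 then (\<rho> + 2*c) / (4 * \<rho>^2) else 1 / (4 * \<rho>)) else 0)
   | (Zb, Zb) \<Rightarrow> (\<rho> + c) / (4 * \<rho>^2 * (\<rho> + 2*c))
   | (BI a, Zb) \<Rightarrow> (if a = 1 then - (c * (\<rho> + c)) / (2 * \<rho>^2 * (\<rho> + 2*c)) else 0)
   | (Zb, BI a) \<Rightarrow> (if a = 1 then - (c * (\<rho> + c)) / (2 * \<rho>^2 * (\<rho> + 2*c)) else 0)
   | _ \<Rightarrow> 0)"

end

theory Submission
  imports Defs
begin

text \<open>Write \<open>B = B\<^sub>1\<^sup>R\<close>. Since \<open>ad B\<close> swaps \<open>e\<^sub>0\<close> and \<open>e\<^sub>1\<close> up to sign, every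
  derivation \<open>D\<close> satisfies \<open>D(e\<^sub>1,e\<^sub>1) = D(B,B) + D(e\<^sub>0,e\<^sub>0)\<close> and
  \<open>D(e\<^sub>0,e\<^sub>0) = D(B,B) + D(e\<^sub>1,e\<^sub>1)\<close>, hence \<open>D(e\<^sub>0,e\<^sub>0) = D(e\<^sub>1,e\<^sub>1)\<close>. As
  \<open>e\<^sub>0\<close> and \<open>e\<^sub>1\<close> are orthogonal to the rest of the basis, \<open>Ric = \<lambda> Id + D\<close> would force
  \<open>ric(e\<^sub>0,e\<^sub>0) / g(e\<^sub>0,e\<^sub>0) = ric(e\<^sub>1,e\<^sub>1) / g(e\<^sub>1,e\<^sub>1)\<close>. The Christoffel symbols,
  obtained from the Koszul formula, give
  \<open>ric(e\<^sub>0,e\<^sub>0) = (n - 1) c / \<rho>\<^sup>2 - (\<rho> + c) / (2 (\<rho> + 2c)\<^sup>2)\<close> and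
  \<open>ric(e\<^sub>1,e\<^sub>1) = -(\<rho> + 3c) / (2 \<rho> (\<rho> + 2c))\<close>, and the equality of the ratios becomes
  \<open>(2 (n - 1) c + \<rho> + 3c) (\<rho> + 2c)\<^sup>2 = \<rho>\<^sup>2 (\<rho> + c)\<close>, which is false for \<open>c > 0\<close>.\<close>

lemma if_zero_mult: "(if P then x else 0) * y = (if P then x * y else (0::real))"
  by simp

lemma mult_if_zero: "y * (if P then x else 0) = (if P then y * x else (0::real))"
  by simp

lemma sum_if_zero: "(\<Sum>j\<in>A. if P then f j else 0) = (if P then sum f A else (0::real))"
  by auto

lemmas delta_simps = if_zero_mult mult_if_zero sum_if_zero

definition koszul :: "'b set \<Rightarrow> ('b \<Rightarrow> 'b \<Rightarrow> 'b \<Rightarrow> real) \<Rightarrow> ('b \<Rightarrow> 'b \<Rightarrow> real) \<Rightarrow>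
    ('b \<Rightarrow> real) \<Rightarrow> ('b \<Rightarrow> real) \<Rightarrow> ('b \<Rightarrow> real) \<Rightarrow> real" where
  "koszul S C G X Y Z =
     ginner S G (vbr S C X Y) Z - ginner S G (vbr S C Y Z) X + ginner S G (vbr S C Z X) Y"

context
  fixes S :: "'b set"
  assumes fin: "finite S"
begin

lemma ginner_bvec_right: "r \<in> S \<Longrightarrow> ginner S G V (bvec r) = (\<Sum>i\<in>S. V i * G i r)"
  unfolding ginner_def bvec_def using fin by (simp add: delta_simps)

lemma ginner_bvec_left: "r \<in> S \<Longrightarrow> ginner S G (bvec r) V = (\<Sum>j\<in>S. G r j * V j)"
  unfolding ginner_def bvec_def using fin by (simp add: delta_simps sum_distrib_left)

lemma ginner_bvec_bvec: "p \<in> S \<Longrightarrow> q \<in> S \<Longrightarrow> ginner S G (bvec p) (bvec q) = G p q"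
  using fin by (subst ginner_bvec_left) (auto simp: bvec_def delta_simps)

lemma ginner_expand_right: "ginner S G V Z = (\<Sum>r\<in>S. Z r * ginner S G V (bvec r))"
proof -
  have "(\<Sum>r\<in>S. Z r * ginner S G V (bvec r)) = (\<Sum>r\<in>S. \<Sum>i\<in>S. V i * G i r * Z r)"
    by (intro sum.cong) (auto simp: ginner_bvec_right sum_distrib_left mult_ac)
  also have "\<dots> = ginner S G V Z"
    unfolding ginner_def by (rule sum.swap)
  finally show ?thesis by simp
qed

lemma ginner_sum_left:
  "ginner S G (\<lambda>k. \<Sum>r\<in>S. Z r * F r k) V = (\<Sum>r\<in>S. Z r * ginner S G (F r) V)"
proof -
  have "ginner S G (\<lambda>k. \<Sum>r\<in>S. Z r * F r k) V = (\<Sum>i\<in>S. \<Sum>j\<in>S. \<Sum>r\<in>S. Z r * F r i * G i j * V j)"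
    unfolding ginner_def by (simp add: sum_distrib_right)
  also have "\<dots> = (\<Sum>r\<in>S. \<Sum>i\<in>S. \<Sum>j\<in>S. Z r * F r i * G i j * V j)"
    by (subst sum.swap) (rule sum.cong[OF refl], rule sum.swap)
  also have "\<dots> = (\<Sum>r\<in>S. Z r * ginner S G (F r) V)"
    unfolding ginner_def by (simp add: sum_distrib_left mult.assoc)
  finally show ?thesis .
qed

lemma vbr_bvec_left: "k \<in> S \<Longrightarrow> vbr S C (bvec p) Y k = (if p \<in> S then \<Sum>j\<in>S. Y j * C p j k else 0)"
  unfolding vbr_def bvec_def using fin by (simp add: delta_simps)

lemma vbr_bvec_right: "k \<in> S \<Longrightarrow> vbr S C X (bvec q) k = (if q \<in> S then \<Sum>i\<in>S. X i * C i q k else 0)"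
  unfolding vbr_def bvec_def using fin by (simp add: delta_simps)

lemma vbr_bvec_bvec:
  "p \<in> S \<Longrightarrow> q \<in> S \<Longrightarrow> vbr S C (bvec p) (bvec q) = (\<lambda>k. if k \<in> S then C p q k else 0)"
  unfolding vbr_def bvec_def using fin by (simp add: delta_simps cong: if_cong)

lemma vbr_expand_right: "vbr S C Y Z = (\<lambda>k. \<Sum>r\<in>S. Z r * vbr S C Y (bvec r) k)"
proof
  fix k
  show "vbr S C Y Z k = (\<Sum>r\<in>S. Z r * vbr S C Y (bvec r) k)"
  proof (cases "k \<in> S")
    case True
    then have "(\<Sum>r\<in>S. Z r * vbr S C Y (bvec r) k) = (\<Sum>i\<in>S. \<Sum>r\<in>S. Y i * Z r * C i r k)"
      by (subst sum.swap) (auto simp: vbr_bvec_right sum_distrib_left mult_ac intro!: sum.cong)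
    with True show ?thesis by (simp add: vbr_def)
  qed (simp add: vbr_def)
qed

lemma vbr_expand_left: "vbr S C Z Y = (\<lambda>k. \<Sum>r\<in>S. Z r * vbr S C (bvec r) Y k)"
proof
  fix k
  show "vbr S C Z Y k = (\<Sum>r\<in>S. Z r * vbr S C (bvec r) Y k)"
  proof (cases "k \<in> S")
    case True
    then have "(\<Sum>r\<in>S. Z r * vbr S C (bvec r) Y k) = (\<Sum>r\<in>S. \<Sum>j\<in>S. Z r * Y j * C r j k)"
      by (auto simp: vbr_bvec_left sum_distrib_left mult_ac intro!: sum.cong)
    with True show ?thesis by (simp add: vbr_def)
  qed (simp add: vbr_def)
qed

lemma koszul_expand_right: "koszul S C G X Y Z = (\<Sum>r\<in>S. Z r * koszul S C G X Y (bvec r))"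
proof -
  have "ginner S G (vbr S C Y Z) X = (\<Sum>r\<in>S. Z r * ginner S G (vbr S C Y (bvec r)) X)"
    by (subst vbr_expand_right) (rule ginner_sum_left)
  moreover have "ginner S G (vbr S C Z X) Y = (\<Sum>r\<in>S. Z r * ginner S G (vbr S C (bvec r) X) Y)"
    by (subst vbr_expand_left) (rule ginner_sum_left)
  ultimately show ?thesis
    unfolding koszul_def ginner_expand_right[of _ "vbr S C X Y" Z]
    by (simp add: sum_subtractf[symmetric] sum.distrib[symmetric] algebra_simps)
qed

lemma koszul_expand_left: "koszul S C G X Y Z = (\<Sum>r\<in>S. X r * koszul S C G (bvec r) Y Z)"
proof -
  have "ginner S G (vbr S C X Y) Z = (\<Sum>r\<in>S. X r * ginner S G (vbr S C (bvec r) Y) Z)"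
    by (subst vbr_expand_left) (rule ginner_sum_left)
  moreover have "ginner S G (vbr S C Z X) Y = (\<Sum>r\<in>S. X r * ginner S G (vbr S C Z (bvec r)) Y)"
    by (subst vbr_expand_right) (rule ginner_sum_left)
  ultimately show ?thesis
    unfolding koszul_def ginner_expand_right[of _ "vbr S C Y Z" X]
    by (simp add: sum_subtractf[symmetric] sum.distrib[symmetric] algebra_simps)
qed

lemma koszul_expand_mid: "koszul S C G X Y Z = (\<Sum>r\<in>S. Y r * koszul S C G X (bvec r) Z)"
proof -
  have "ginner S G (vbr S C X Y) Z = (\<Sum>r\<in>S. Y r * ginner S G (vbr S C X (bvec r)) Z)"
    by (subst vbr_expand_right) (rule ginner_sum_left)
  moreover have "ginner S G (vbr S C Y Z) X = (\<Sum>r\<in>S. Y r * ginner S G (vbr S C (bvec r) Z) X)"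
    by (subst vbr_expand_left) (rule ginner_sum_left)
  ultimately show ?thesis
    unfolding koszul_def ginner_expand_right[of _ "vbr S C Z X" Y]
    by (simp add: sum_subtractf[symmetric] sum.distrib[symmetric] algebra_simps)
qed

lemma koszul_bilinear:
  "koszul S C G X Y Z = (\<Sum>p\<in>S. \<Sum>q\<in>S. X p * Y q * koszul S C G (bvec p) (bvec q) Z)"
  by (subst koszul_expand_left, subst koszul_expand_mid) (simp add: sum_distrib_left mult_ac)

end

subsection \<open>The Levi-Civita connection in a basis\<close>

locale inverse_gram =
  fixes S :: "'b set" and C :: "'b \<Rightarrow> 'b \<Rightarrow> 'b \<Rightarrow> real" and G H :: "'b \<Rightarrow> 'b \<Rightarrow> real"
  assumes finite_basis: "finite S"
    and G_sym: "\<And>i j. i \<in> S \<Longrightarrow> j \<in> S \<Longrightarrow> G i j = G j i"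
    and H_sym: "\<And>i j. i \<in> S \<Longrightarrow> j \<in> S \<Longrightarrow> H i j = H j i"
    and G_H_inverse: "\<And>i k. i \<in> S \<Longrightarrow> k \<in> S \<Longrightarrow> (\<Sum>j\<in>S. G i j * H j k) = (if i = k then 1 else 0)"
begin

lemma H_G_inverse: "r \<in> S \<Longrightarrow> s \<in> S \<Longrightarrow> (\<Sum>i\<in>S. H r i * G i s) = (if r = s then 1 else 0)"
  using G_H_inverse[of s r] by (simp add: G_sym H_sym mult.commute cong: sum.cong)

lemma eq_if_ginner_bvec_eq:
  assumes "\<forall>k. k \<notin> S \<longrightarrow> V k = 0" "\<forall>k. k \<notin> S \<longrightarrow> W k = 0"
    and "\<And>s. s \<in> S \<Longrightarrow> ginner S G V (bvec s) = ginner S G W (bvec s)"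
  shows "V = W"
proof
  fix k
  show "V k = W k"
  proof (cases "k \<in> S")
    case True
    have orth: "(\<Sum>i\<in>S. (V i - W i) * G i j) = 0" if "j \<in> S" for j
      using assms(3)[OF that] that finite_basis
      by (simp add: ginner_bvec_right left_diff_distrib sum_subtractf)
    have "V k - W k = (\<Sum>i\<in>S. (V i - W i) * (\<Sum>j\<in>S. G i j * H j k))"
      using True finite_basis by (simp add: G_H_inverse delta_simps cong: sum.cong)
    also have "\<dots> = (\<Sum>j\<in>S. (\<Sum>i\<in>S. (V i - W i) * G i j) * H j k)"
      unfolding sum_distrib_left sum_distrib_right by (subst sum.swap) (simp add: mult_ac)
    also have "\<dots> = 0"
      by (simp add: orth)
    finally show ?thesis by simp
  qed (use assms in auto)
qed

lemma lc_eq_raised_koszul: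
  "lc S C G X Y = (\<lambda>k. if k \<in> S then (\<Sum>r\<in>S. H k r * koszul S C G X Y (bvec r)) / 2 else 0)"
  (is "_ = ?W")
proof -
  have W_bvec: "2 * ginner S G ?W (bvec s) = koszul S C G X Y (bvec s)" if "s \<in> S" for s
  proof -
    have "2 * ginner S G ?W (bvec s) = (\<Sum>i\<in>S. \<Sum>r\<in>S. H i r * koszul S C G X Y (bvec r) * G i s)"
      using that finite_basis
      by (simp add: ginner_bvec_right sum_distrib_right sum_divide_distrib[symmetric])
    also have "\<dots> = (\<Sum>r\<in>S. koszul S C G X Y (bvec r) * (\<Sum>i\<in>S. H r i * G i s))"
      by (subst sum.swap) (auto simp: sum_distrib_left H_sym mult_ac intro!: sum.cong)
    also have "\<dots> = koszul S C G X Y (bvec s)"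
      using that finite_basis by (simp add: H_G_inverse delta_simps)
    finally show ?thesis .
  qed
  have W_koszul: "2 * ginner S G ?W Z = koszul S C G X Y Z" for Z
  proof -
    have "2 * ginner S G ?W Z = (\<Sum>r\<in>S. Z r * (2 * ginner S G ?W (bvec r)))"
      by (subst ginner_expand_right[OF finite_basis]) (simp add: sum_distrib_left mult_ac)
    also have "\<dots> = (\<Sum>r\<in>S. Z r * koszul S C G X Y (bvec r))"
      by (simp add: W_bvec)
    also have "\<dots> = koszul S C G X Y Z"
      by (rule koszul_expand_right[OF finite_basis, symmetric])
    finally show ?thesis .
  qed
  show ?thesis
    unfolding lc_def
  proof (rule the_equality)
    show "(\<forall>k. k \<notin> S \<longrightarrow> ?W k = 0) \<and> (\<forall>Z. 2 * ginner S G ?W Z = ginner S G (vbr S C X Y) Z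
        - ginner S G (vbr S C Y Z) X + ginner S G (vbr S C Z X) Y)"
      using W_koszul unfolding koszul_def by simp
  next
    fix W
    assume W: "(\<forall>k. k \<notin> S \<longrightarrow> W k = 0) \<and> (\<forall>Z. 2 * ginner S G W Z = ginner S G (vbr S C X Y) Z
        - ginner S G (vbr S C Y Z) X + ginner S G (vbr S C Z X) Y)"
    then have W_koszul': "2 * ginner S G W Z = koszul S C G X Y Z" for Z
      unfolding koszul_def by simp
    have "ginner S G W (bvec s) = ginner S G ?W (bvec s)" for s
      using W_koszul'[of "bvec s"] W_koszul[of "bvec s"] by linarith
    with W show "W = ?W"
      by (intro eq_if_ginner_bvec_eq) auto
  qed
qed

definition christoffel :: "'b \<Rightarrow> 'b \<Rightarrow> 'b \<Rightarrow> real" where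
  "christoffel p q k = lc S C G (bvec p) (bvec q) k"

lemma christoffel_outside: "k \<notin> S \<Longrightarrow> christoffel p q k = 0"
  by (simp add: christoffel_def lc_eq_raised_koszul)

lemma christoffel_eq:
  "k \<in> S \<Longrightarrow> christoffel p q k = (\<Sum>r\<in>S. koszul S C G (bvec p) (bvec q) (bvec r) * H r k) / 2"
  by (simp add: christoffel_def lc_eq_raised_koszul H_sym mult.commute cong: sum.cong)

lemma lc_bilinear: "lc S C G X Y k = (\<Sum>p\<in>S. \<Sum>q\<in>S. X p * Y q * christoffel p q k)"
proof (cases "k \<in> S")
  case True
  let ?K = "\<lambda>p q r. koszul S C G (bvec p) (bvec q) (bvec r)"
  have "lc S C G X Y k = (\<Sum>r\<in>S. \<Sum>p\<in>S. \<Sum>q\<in>S. X p * Y q * (H k r * ?K p q r)) / 2"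
    using True finite_basis
    by (simp add: lc_eq_raised_koszul koszul_bilinear[OF finite_basis, of _ _ X Y] sum_distrib_left mult_ac)
  also have "\<dots> = (\<Sum>p\<in>S. \<Sum>q\<in>S. X p * Y q * (\<Sum>r\<in>S. H k r * ?K p q r)) / 2"
    unfolding sum_distrib_left
    by (subst sum.swap, rule arg_cong[where f = "\<lambda>x. x / 2"], rule sum.cong[OF refl], rule sum.swap)
  also have "\<dots> = (\<Sum>p\<in>S. \<Sum>q\<in>S. X p * Y q * christoffel p q k)"
    using True by (simp add: christoffel_def lc_eq_raised_koszul sum_divide_distrib[symmetric])
  finally show ?thesis .
qed (simp add: lc_eq_raised_koszul christoffel_outside)

lemma lc_bvec_left: "i \<in> S \<Longrightarrow> lc S C G (bvec i) Y k = (\<Sum>q\<in>S. Y q * christoffel i q k)"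
  using finite_basis by (simp add: lc_bilinear bvec_def delta_simps)

lemma lc_bvec_right: "j \<in> S \<Longrightarrow> lc S C G X (bvec j) k = (\<Sum>p\<in>S. X p * christoffel p j k)"
  using finite_basis by (simp add: lc_bilinear bvec_def delta_simps)

definition ricci_term :: "'b \<Rightarrow> 'b \<Rightarrow> 'b \<Rightarrow> real" where
  "ricci_term y z i = (\<Sum>q\<in>S. christoffel y z q * christoffel i q i)
     - (\<Sum>q\<in>S. christoffel i z q * christoffel y q i) - (\<Sum>p\<in>S. C i y p * christoffel p z i)"

lemma ricci_bvec_bvec:
  assumes "y \<in> S" "z \<in> S"
  shows "ricci S C G (bvec y) (bvec z) = (\<Sum>i\<in>S. ricci_term y z i)"
  unfolding ricci_def curv_def ricci_term_def
  using assms finite_basis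
  by (intro sum.cong refl)
     (simp add: lc_bvec_left lc_bvec_right vbr_bvec_bvec christoffel_def[symmetric] if_zero_mult)

end

lemma mapply_bvec:
  "finite S \<Longrightarrow> x \<in> S \<Longrightarrow> mapply S M (bvec x) = (\<lambda>k. if k \<in> S then M k x else 0)"
  unfolding mapply_def bvec_def by (simp add: delta_simps cong: if_cong)

lemma is_derivation_bvec:
  assumes "finite S" "is_derivation S C M" "p \<in> S" "q \<in> S" "l \<in> S"
  shows "(\<Sum>k\<in>S. M l k * C p q k) = (\<Sum>j\<in>S. M j p * C j q l) + (\<Sum>j\<in>S. M j q * C p j l)"
proof -
  have "mapply S M (vbr S C (bvec p) (bvec q)) l =
      vbr S C (mapply S M (bvec p)) (bvec q) l + vbr S C (bvec p) (mapply S M (bvec q)) l"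
    using assms(2) unfolding is_derivation_def by metis
  then show ?thesis
    using assms by (simp add: vbr_bvec_bvec vbr_bvec_left vbr_bvec_right mapply_bvec)
      (simp add: mapply_def if_zero_mult mult.commute cong: sum.cong)
qed

lemma is_derivation_diag_add:
  assumes "finite S" "is_derivation S C M" "p \<in> S" "x \<in> S" "y \<in> S" "a \<noteq> 0"
    and "\<And>k. k \<in> S \<Longrightarrow> C p x k = (if k = y then a else 0)"
    and "\<And>j. j \<in> S \<Longrightarrow> C j x y = (if j = p then a else 0)"
    and "\<And>j. j \<in> S \<Longrightarrow> C p j y = (if j = x then a else 0)"
  shows "M y y = M p p + M x x"
proof -
  have "a * M y y = a * (M p p + M x x)"
    using is_derivation_bvec[OF assms(1-4,5)] assms(1,3-5,7-9)
    by (simp add: delta_simps algebra_simps cong: sum.cong)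
  with \<open>a \<noteq> 0\<close> show ?thesis by simp
qed

lemma ginner_mapply_bvec:
  assumes "finite S" "x \<in> S" "\<And>i. i \<in> S \<Longrightarrow> i \<noteq> x \<Longrightarrow> G i x = 0"
  shows "ginner S G (mapply S M (bvec x)) (bvec x) = M x x * G x x"
proof -
  have "ginner S G (mapply S M (bvec x)) (bvec x) = (\<Sum>i\<in>S. M i x * G i x)"
    using assms(1,2) by (simp add: ginner_bvec_right mapply_bvec cong: sum.cong)
  also have "\<dots> = M x x * G x x"
    using assms by (subst sum.remove[of _ x]) auto
  finally show ?thesis .
qed

text \<open>On a basis vector \<open>x\<close> orthogonal to all others, \<open>ric(x, x) = (\<lambda> + D x x) g(x, x)\<close>.\<close>

lemma solvsoliton_ricci_curvature_eq:
  assumes "solvsoliton S C G" "finite S" "x \<in> S" "y \<in> S"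
    and "\<And>i. i \<in> S \<Longrightarrow> i \<noteq> x \<Longrightarrow> G i x = 0" "\<And>i. i \<in> S \<Longrightarrow> i \<noteq> y \<Longrightarrow> G i y = 0"
    and "\<And>M. is_derivation S C M \<Longrightarrow> M x x = M y y"
  shows "ricci S C G (bvec x) (bvec x) * G y y = ricci S C G (bvec y) (bvec y) * G x x"
proof -
  obtain lam M where "is_derivation S C M"
    and sol: "\<And>X Y. ricci S C G X Y = lam * ginner S G X Y + ginner S G (mapply S M X) Y"
    using assms(1) unfolding solvsoliton_def by blast
  then have "M x x = M y y"
    using assms(7) by blast
  moreover have "ricci S C G (bvec z) (bvec z) = (lam + M z z) * G z z" if "z \<in> {x, y}" for z
    using that assms(2-6) sol[of "bvec z" "bvec z"]
    by (auto simp: ginner_bvec_bvec ginner_mapply_bvec algebra_simps)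
  ultimately show ?thesis
    by simp
qed

subsection \<open>The metric Lie algebra \<open>(l, g\<^sub>\<rho>\<^sup>c)\<close>\<close>

lemma mem_lset [simp]:
  "BR a \<in> lset n \<longleftrightarrow> 1 \<le> a \<and> a \<le> n - 1"
  "BI a \<in> lset n \<longleftrightarrow> 1 \<le> a \<and> a \<le> n - 1"
  "Ee a \<in> lset n \<longleftrightarrow> a \<le> n - 1"
  "Ff a \<in> lset n \<longleftrightarrow> a \<le> n - 1"
  "Zb \<in> lset n"
  by (auto simp: lset_def)

lemma finite_lset [simp]: "finite (lset n)"
  by (simp add: lset_def)

lemma sum_lset:
  assumes "n \<ge> 2"
  shows "(\<Sum>x\<in>lset n. f x) = f (BR 1) + f (BI 1) + f (Ee 0) + f (Ee 1) + f (Ff 0) + f (Ff 1) + f Zb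
     + (\<Sum>a\<in>{2..n-1}. f (BR a) + f (BI a) + f (Ee a) + f (Ff a))"
proof -
  define I where "I = {2..n-1}"
  define A where "A = {BR 1, BI 1, Ee 0, Ee 1, Ff 0, Ff 1, Zb}"
  have lset_eq: "lset n = A \<union> (BR ` I \<union> BI ` I \<union> Ee ` I \<union> Ff ` I)"
  proof (rule set_eqI)
    fix x
    show "x \<in> lset n \<longleftrightarrow> x \<in> A \<union> (BR ` I \<union> BI ` I \<union> Ee ` I \<union> Ff ` I)"
      using assms by (cases x) (auto simp: A_def I_def image_iff)
  qed
  have "sum f (lset n) = sum f A + sum f (BR ` I \<union> BI ` I \<union> Ee ` I \<union> Ff ` I)"
    unfolding lset_eq by (rule sum.union_disjoint) (auto simp: A_def I_def)
  also have "sum f (BR ` I \<union> BI ` I \<union> Ee ` I \<union> Ff ` I)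
      = sum f (BR ` I) + sum f (BI ` I) + sum f (Ee ` I) + sum f (Ff ` I)"
    by (subst sum.union_disjoint, auto simp: I_def)+
  also have "\<dots> = (\<Sum>a\<in>I. f (BR a) + f (BI a) + f (Ee a) + f (Ff a))"
    by (simp add: sum.reindex inj_on_def sum.distrib)
  finally show ?thesis
    by (simp add: A_def I_def add.assoc)
qed

definition lG_inverse :: "real \<Rightarrow> real \<Rightarrow> lb \<Rightarrow> lb \<Rightarrow> real" where
  "lG_inverse \<rho> c x y = (case (x, y) of
     (BR a, BR b) \<Rightarrow> (if a = b then (if a = 1 then \<rho> / (\<rho> + c) else 4 * \<rho> / (\<rho> + c)) else 0)
   | (BI a, BI b) \<Rightarrow> (if a = b then (if a = 1 then \<rho> / (\<rho> + c) else 4 * \<rho> / (\<rho> + c)) else 0)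
   | (Ee a, Ee b) \<Rightarrow> (if a = b then (if a = 0 then 4 * \<rho>^2 / (\<rho> + 2*c) else 4 * \<rho>) else 0)
   | (Ff a, Ff b) \<Rightarrow> (if a = b then (if a = 0 then 4 * \<rho>^2 / (\<rho> + 2*c) else 4 * \<rho>) else 0)
   | (Zb, Zb) \<Rightarrow> 4 * \<rho> * (\<rho> + c)
   | (BI a, Zb) \<Rightarrow> (if a = 1 then 2 * \<rho> * c / (\<rho> + c) else 0)
   | (Zb, BI a) \<Rightarrow> (if a = 1 then 2 * \<rho> * c / (\<rho> + c) else 0)
   | _ \<Rightarrow> 0)"

lemma sum_mult_sparse_symmetric:
  fixes f :: "'b \<Rightarrow> real"
  assumes "finite S" "r \<in> S" "u \<in> S" "v \<in> S" "u \<noteq> v"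
  shows "(\<Sum>l\<in>S. f l * ((if l = r then d else 0) + (if l = u \<and> r = v \<or> l = v \<and> r = u then e else 0)))
     = f r * d + (if r = v then f u * e else 0) + (if r = u then f v * e else 0)"
proof -
  have "(\<Sum>l\<in>S. f l * ((if l = r then d else 0) + (if l = u \<and> r = v \<or> l = v \<and> r = u then e else 0)))
    = (\<Sum>l\<in>S. (if l = r then f r * d else 0) + ((if r = v then (if l = u then f u * e else 0) else 0)
         + (if r = u then (if l = v then f v * e else 0) else 0)))"
    using assms(5) by (intro sum.cong) auto
  also have "\<dots> = f r * d + (if r = v then f u * e else 0) + (if r = u then f v * e else 0)"
    using assms by (simp add: sum.distrib delta_simps)
  finally show ?thesis .
qed

lemma lG_sparse: "lG \<rho> c l r = (if l = r then lG \<rho> c r r else 0)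
   + (if l = BI 1 \<and> r = Zb \<or> l = Zb \<and> r = BI 1 then lG \<rho> c (BI 1) Zb else 0)"
  by (cases l; cases r) (auto simp: lG_def)

lemma lG_inverse_sparse: "lG_inverse \<rho> c l r = (if l = r then lG_inverse \<rho> c r r else 0)
   + (if l = BI 1 \<and> r = Zb \<or> l = Zb \<and> r = BI 1 then lG_inverse \<rho> c (BI 1) Zb else 0)"
  by (cases l; cases r) (auto simp: lG_inverse_def)

lemma sum_mult_lG:
  assumes "n \<ge> 2" "r \<in> lset n"
  shows "(\<Sum>l\<in>lset n. f l * lG \<rho> c l r) = f r * lG \<rho> c r r
    + (if r = Zb then f (BI 1) * lG \<rho> c (BI 1) Zb else 0) + (if r = BI 1 then f Zb * lG \<rho> c (BI 1) Zb else 0)"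
  using assms by (subst lG_sparse) (rule sum_mult_sparse_symmetric; simp)

lemma sum_mult_lG_inverse:
  assumes "n \<ge> 2" "r \<in> lset n"
  shows "(\<Sum>l\<in>lset n. f l * lG_inverse \<rho> c l r) = f r * lG_inverse \<rho> c r r
    + (if r = Zb then f (BI 1) * lG_inverse \<rho> c (BI 1) Zb else 0)
    + (if r = BI 1 then f Zb * lG_inverse \<rho> c (BI 1) Zb else 0)"
  using assms by (subst lG_inverse_sparse) (rule sum_mult_sparse_symmetric; simp)

lemma lG_sym: "lG \<rho> c i j = lG \<rho> c j i"
  by (cases i; cases j) (auto simp: lG_def)

lemma lG_inverse_sym: "lG_inverse \<rho> c i j = lG_inverse \<rho> c j i"
  by (cases i; cases j) (auto simp: lG_inverse_def)

lemma lG_mult_lG_inverse: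
  assumes "n \<ge> 2" "\<rho> > 0" "c > 0" "i \<in> lset n" "k \<in> lset n"
  shows "(\<Sum>j\<in>lset n. lG \<rho> c i j * lG_inverse \<rho> c j k) = (if i = k then 1 else 0)"
proof -
  have "\<rho> \<noteq> 0" "\<rho> + c \<noteq> 0" "\<rho> + 2 * c \<noteq> 0"
    using assms by auto
  with assms show ?thesis
    by (simp add: sum_mult_lG_inverse, cases i; cases k)
       (auto simp: lG_def lG_inverse_def divide_simps power2_eq_square power3_eq_cube,
        simp_all add: algebra_simps)
qed

lemma ricci_curvature_products_neq:
  fixes \<rho> c N :: real
  assumes "\<rho> > 0" "c > 0" "N \<ge> 0"
  shows "(N * c / \<rho>^2 - (\<rho> + c) / (2 * (\<rho> + 2*c)^2)) * (1 / (4 * \<rho>))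
     \<noteq> - (\<rho> + 3*c) / (2 * \<rho> * (\<rho> + 2*c)) * ((\<rho> + 2*c) / (4 * \<rho>^2))"
proof
  assume eq: "(N * c / \<rho>^2 - (\<rho> + c) / (2 * (\<rho> + 2*c)^2)) * (1 / (4 * \<rho>))
     = - (\<rho> + 3*c) / (2 * \<rho> * (\<rho> + 2*c)) * ((\<rho> + 2*c) / (4 * \<rho>^2))"
  have "\<rho> + 2*c \<noteq> 0"
    using assms by simp
  with eq assms have "2 * N * c * (\<rho> + 2*c)^2 + (\<rho> + 3*c) * (\<rho> + 2*c)^2 = \<rho>^2 * (\<rho> + c)"
    by (simp add: divide_simps) (simp add: algebra_simps power2_eq_square)
  moreover have "\<rho>^2 * (\<rho> + c) < (\<rho> + 3*c) * (\<rho> + 2*c)^2"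
    using assms by (simp add: power2_eq_square algebra_simps add_pos_pos zero_less_mult_iff)
  moreover have "0 \<le> 2 * N * c * (\<rho> + 2*c)^2"
    using assms by simp
  ultimately show False
    by linarith
qed

locale one_loop_deformation =
  fixes n :: nat and \<rho> c :: real
  assumes n_ge_2: "n \<ge> 2" and rho_pos: "\<rho> > 0" and c_pos: "c > 0"
begin

sublocale inverse_gram "lset n" lC "lG \<rho> c" "lG_inverse \<rho> c"
proof
  show "finite (lset n)"
    by simp
  show "lG \<rho> c i j = lG \<rho> c j i" "lG_inverse \<rho> c i j = lG_inverse \<rho> c j i" for i j
    by (rule lG_sym, rule lG_inverse_sym)
  show "i \<in> lset n \<Longrightarrow> k \<in> lset n \<Longrightarrow> (\<Sum>j\<in>lset n. lG \<rho> c i j * lG_inverse \<rho> c j k) = (if i = k then 1 else 0)"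
    for i k
    by (rule lG_mult_lG_inverse[OF n_ge_2 rho_pos c_pos])
qed

lemma ginner_bvec_lset:
  "r \<in> lset n \<Longrightarrow> ginner (lset n) (lG \<rho> c) v (bvec r) = v r * lG \<rho> c r r
    + (if r = Zb then v (BI 1) * lG \<rho> c (BI 1) Zb else 0) + (if r = BI 1 then v Zb * lG \<rho> c (BI 1) Zb else 0)"
  by (simp add: ginner_bvec_right sum_mult_lG[OF n_ge_2])

lemma christoffel_lset:
  "christoffel p q k = (if k \<notin> lset n then 0 else
     (koszul (lset n) lC (lG \<rho> c) (bvec p) (bvec q) (bvec k) * lG_inverse \<rho> c k k
      + (if k = Zb then koszul (lset n) lC (lG \<rho> c) (bvec p) (bvec q) (bvec (BI 1))
           * lG_inverse \<rho> c (BI 1) Zb else 0)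
      + (if k = BI 1 then koszul (lset n) lC (lG \<rho> c) (bvec p) (bvec q) (bvec Zb)
           * lG_inverse \<rho> c (BI 1) Zb else 0)) / 2)"
  by (simp add: christoffel_eq christoffel_outside sum_mult_lG_inverse[OF n_ge_2])

lemma positive_eq_zero_iff: "0 < x \<Longrightarrow> x = 0 \<longleftrightarrow> False" for x :: real
  by simp

lemmas positivity_simps = positive_eq_zero_iff add_pos_pos zero_less_mult_iff rho_pos c_pos

lemmas christoffel_simps = christoffel_lset koszul_def vbr_bvec_bvec ginner_bvec_lset
  lC_def lup_def dl_def lG_def lG_inverse_def

subsection \<open>Christoffel symbols and Ricci curvatures along \<open>e\<^sub>0\<close> and \<open>e\<^sub>1\<close>\<close>

lemma christoffel_Ee0:
  "christoffel (BR 1) (Ee 0) k = (if k = Ee 1 then c / \<rho> else 0)"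
  "christoffel (BI 1) (Ee 0) k = (if k = Ff 0 then - (\<rho>^2 + 3*\<rho>*c + 3*c^2) / (\<rho> + 2*c)^2 else 0)
     + (if k = Ff 1 then - c / \<rho> else 0)"
  "christoffel (Ee 0) (Ee 0) k = 0"
  "christoffel (Ee 1) (Ee 0) k = (if k = BR 1 then - 1 / (4*\<rho>) else 0)"
  "christoffel (Ff 0) (Ee 0) k = (if k = Zb then - 1 / 2 else 0)"
  "christoffel (Ff 1) (Ee 0) k = (if k = BI 1 then 1 / (4*\<rho>) else 0) + (if k = Zb then c / (2*\<rho>) else 0)"
  "christoffel Zb (Ee 0) k = (if k = Ff 0 then - (\<rho> + c) / (2 * (\<rho> + 2*c)^2) else 0)"
  "\<lbrakk>2 \<le> a; a \<le> n - 1\<rbrakk> \<Longrightarrow> christoffel (BR a) (Ee 0) k = (if k = Ee a then c / (2*\<rho>) else 0)"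
  "\<lbrakk>2 \<le> a; a \<le> n - 1\<rbrakk> \<Longrightarrow> christoffel (BI a) (Ee 0) k = (if k = Ff a then - c / (2*\<rho>) else 0)"
  "\<lbrakk>2 \<le> a; a \<le> n - 1\<rbrakk> \<Longrightarrow> christoffel (Ee a) (Ee 0) k = (if k = BR a then - 1 / (2*\<rho>) else 0)"
  "\<lbrakk>2 \<le> a; a \<le> n - 1\<rbrakk> \<Longrightarrow> christoffel (Ff a) (Ee 0) k = (if k = BI a then 1 / (2*\<rho>) else 0)"
  using n_ge_2
  by (cases k; auto simp: christoffel_simps; simp add: field_simps power2_eq_square positivity_simps)+

lemma christoffel_Ee1:
  "christoffel (BR 1) (Ee 1) k = (if k = Ee 0 then - c / (\<rho> + 2*c) else 0)"
  "christoffel (BI 1) (Ee 1) k = (if k = Ff 0 then - c / (\<rho> + 2*c) else 0)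
     + (if k = Ff 1 then (\<rho>^2 + \<rho>*c - c^2) / (\<rho> * (\<rho> + 2*c)) else 0)"
  "christoffel (Ee 0) (Ee 1) k = (if k = BR 1 then - 1 / (4*\<rho>) else 0)"
  "christoffel (Ee 1) (Ee 1) k = 0"
  "christoffel (Ff 0) (Ee 1) k = (if k = BI 1 then - 1 / (4*\<rho>) else 0) + (if k = Zb then - c / (2*\<rho>) else 0)"
  "christoffel (Ff 1) (Ee 1) k = (if k = Zb then 1 / 2 else 0)"
  "christoffel Zb (Ee 1) k = (if k = Ff 1 then (\<rho> + c) / (2 * \<rho> * (\<rho> + 2*c)) else 0)"
  "\<lbrakk>2 \<le> a; a \<le> n - 1\<rbrakk> \<Longrightarrow> christoffel (BR a) (Ee 1) k = (if k = Ee a then - 1 / 2 else 0)"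
  "\<lbrakk>2 \<le> a; a \<le> n - 1\<rbrakk> \<Longrightarrow> christoffel (BI a) (Ee 1) k = (if k = Ff a then 1 / 2 else 0)"
  "\<lbrakk>2 \<le> a; a \<le> n - 1\<rbrakk> \<Longrightarrow> christoffel (Ee a) (Ee 1) k = 0"
  "\<lbrakk>2 \<le> a; a \<le> n - 1\<rbrakk> \<Longrightarrow> christoffel (Ff a) (Ee 1) k = 0"
  using n_ge_2
  by (cases k; auto simp: christoffel_simps; simp add: field_simps power2_eq_square positivity_simps)+

lemma lC_Ee:
  "lC (BR 1) (Ee b) k = (if b = 0 \<and> k = Ee 1 \<or> b = 1 \<and> k = Ee 0 then - 1 else 0)"
  "lC (BI 1) (Ee b) k = (if b \<le> 1 \<and> k = Ff 0 then - 1 else 0) + (if b \<le> 1 \<and> k = Ff 1 then 1 else 0)"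
  "2 \<le> a \<Longrightarrow> b \<le> 1 \<Longrightarrow> lC (BR a) (Ee b) k = (if k = Ee a then - 1 / 2 else 0)"
  "2 \<le> a \<Longrightarrow> b \<le> 1 \<Longrightarrow> lC (BI a) (Ee b) k = (if k = Ff a then 1 / 2 else 0)"
  "lC (Ee a) (Ee b) k = 0"
  "lC (Ff a) (Ee b) k = (if a = b \<and> k = Zb then (if a = 0 then - 1 else 1) else 0)"
  "lC Zb (Ee b) k = 0"
  by (cases k; auto simp: lC_def lup_def dl_def)+

text \<open>The simplifier rewrites the numeral \<open>1 :: nat\<close> to \<open>Suc 0\<close>, so the tables above are
  handed to it with \<open>One_nat_def\<close> unfolded.\<close>

lemma ricci_term_Ee0:
  "ricci_term (Ee 0) (Ee 0) (BR 1) = (c - \<rho>) / (4 * \<rho>^2)"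
  "ricci_term (Ee 0) (Ee 0) (BI 1) = (c - \<rho>) / (4 * \<rho>^2)"
  "ricci_term (Ee 0) (Ee 0) (Ee 0) = 0"
  "ricci_term (Ee 0) (Ee 0) (Ee 1) = (\<rho> + c) / (4 * \<rho>^2)"
  "ricci_term (Ee 0) (Ee 0) (Ff 0) = - 3 * (\<rho> + c) / (4 * (\<rho> + 2*c)^2)"
  "ricci_term (Ee 0) (Ee 0) (Ff 1) = (\<rho> + c) / (4 * \<rho>^2)"
  "ricci_term (Ee 0) (Ee 0) Zb = (\<rho> + c) / (4 * (\<rho> + 2*c)^2)"
  "\<lbrakk>2 \<le> a; a \<le> n - 1\<rbrakk> \<Longrightarrow> ricci_term (Ee 0) (Ee 0) (BR a) = (c - \<rho>) / (4 * \<rho>^2)"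
  "\<lbrakk>2 \<le> a; a \<le> n - 1\<rbrakk> \<Longrightarrow> ricci_term (Ee 0) (Ee 0) (BI a) = (c - \<rho>) / (4 * \<rho>^2)"
  "\<lbrakk>2 \<le> a; a \<le> n - 1\<rbrakk> \<Longrightarrow> ricci_term (Ee 0) (Ee 0) (Ee a) = (\<rho> + c) / (4 * \<rho>^2)"
  "\<lbrakk>2 \<le> a; a \<le> n - 1\<rbrakk> \<Longrightarrow> ricci_term (Ee 0) (Ee 0) (Ff a) = (\<rho> + c) / (4 * \<rho>^2)"
  using n_ge_2
  by (simp add: ricci_term_def christoffel_Ee0[unfolded One_nat_def] lC_Ee[unfolded One_nat_def]
      distrib_right sum.distrib delta_simps;
      auto simp: christoffel_simps; simp add: field_simps power2_eq_square positivity_simps)+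

lemma ricci_term_Ee1:
  "ricci_term (Ee 1) (Ee 1) (BR 1) = - (\<rho> + 3*c) / (4 * \<rho> * (\<rho> + 2*c))"
  "ricci_term (Ee 1) (Ee 1) (BI 1) = - (\<rho> + 3*c) / (4 * \<rho> * (\<rho> + 2*c))"
  "ricci_term (Ee 1) (Ee 1) (Ee 0) = (\<rho> + c) / (4 * \<rho> * (\<rho> + 2*c))"
  "ricci_term (Ee 1) (Ee 1) (Ee 1) = 0"
  "ricci_term (Ee 1) (Ee 1) (Ff 0) = (\<rho> + c) / (4 * \<rho> * (\<rho> + 2*c))"
  "ricci_term (Ee 1) (Ee 1) (Ff 1) = - 3 * (\<rho> + c) / (4 * \<rho> * (\<rho> + 2*c))"
  "ricci_term (Ee 1) (Ee 1) Zb = (\<rho> + c) / (4 * \<rho> * (\<rho> + 2*c))"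
  "\<lbrakk>2 \<le> a; a \<le> n - 1\<rbrakk> \<Longrightarrow> ricci_term (Ee 1) (Ee 1) (BR a) = 0"
  "\<lbrakk>2 \<le> a; a \<le> n - 1\<rbrakk> \<Longrightarrow> ricci_term (Ee 1) (Ee 1) (BI a) = 0"
  "\<lbrakk>2 \<le> a; a \<le> n - 1\<rbrakk> \<Longrightarrow> ricci_term (Ee 1) (Ee 1) (Ee a) = 0"
  "\<lbrakk>2 \<le> a; a \<le> n - 1\<rbrakk> \<Longrightarrow> ricci_term (Ee 1) (Ee 1) (Ff a) = 0"
  using n_ge_2
  by (simp add: ricci_term_def christoffel_Ee1[unfolded One_nat_def] lC_Ee[unfolded One_nat_def]
      distrib_right sum.distrib delta_simps;
      auto simp: christoffel_simps; simp add: field_simps power2_eq_square positivity_simps)+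

lemma ricci_Ee0:
  "ricci (lset n) lC (lG \<rho> c) (bvec (Ee 0)) (bvec (Ee 0)) = (real n - 1) * c / \<rho>^2 - (\<rho> + c) / (2 * (\<rho> + 2*c)^2)"
proof -
  have generic: "(\<Sum>a\<in>{2..n-1}. ricci_term (Ee 0) (Ee 0) (BR a) + ricci_term (Ee 0) (Ee 0) (BI a)
      + ricci_term (Ee 0) (Ee 0) (Ee a) + ricci_term (Ee 0) (Ee 0) (Ff a)) = (real n - 2) * (c / \<rho>^2)"
  proof -
    have "(\<Sum>a\<in>{2..n-1}. ricci_term (Ee 0) (Ee 0) (BR a) + ricci_term (Ee 0) (Ee 0) (BI a)
        + ricci_term (Ee 0) (Ee 0) (Ee a) + ricci_term (Ee 0) (Ee 0) (Ff a)) = (\<Sum>a\<in>{2..n-1}. c / \<rho>^2)"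
      using rho_pos by (intro sum.cong) (auto simp: ricci_term_Ee0 field_simps)
    with n_ge_2 show ?thesis
      by (simp add: of_nat_diff)
  qed
  show ?thesis
    using n_ge_2 rho_pos c_pos
    by (simp add: ricci_bvec_bvec sum_lset generic ricci_term_Ee0[unfolded One_nat_def])
       (simp add: field_simps power2_eq_square positivity_simps)
qed

lemma ricci_Ee1:
  "ricci (lset n) lC (lG \<rho> c) (bvec (Ee 1)) (bvec (Ee 1)) = - (\<rho> + 3*c) / (2 * \<rho> * (\<rho> + 2*c))"
proof -
  have generic: "(\<Sum>a\<in>{2..n-1}. ricci_term (Ee 1) (Ee 1) (BR a) + ricci_term (Ee 1) (Ee 1) (BI a)
      + ricci_term (Ee 1) (Ee 1) (Ee a) + ricci_term (Ee 1) (Ee 1) (Ff a)) = 0"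
    by (intro sum.neutral) (auto simp: ricci_term_Ee1[unfolded One_nat_def])
  show ?thesis
    using n_ge_2 rho_pos c_pos
    by (simp add: ricci_bvec_bvec sum_lset generic ricci_term_Ee1[unfolded One_nat_def])
       (simp add: field_simps power2_eq_square positivity_simps)
qed

lemma lC_Ee_components:
  "j \<in> lset n \<Longrightarrow> lC j (Ee 0) (Ee 1) = (if j = BR 1 then - 1 else 0)"
  "j \<in> lset n \<Longrightarrow> lC j (Ee 1) (Ee 0) = (if j = BR 1 then - 1 else 0)"
  "lC (BR 1) j (Ee 1) = (if j = Ee 0 then - 1 else 0)"
  "lC (BR 1) j (Ee 0) = (if j = Ee 1 then - 1 else 0)"
  by (cases j; auto simp: lC_def lup_def dl_def)+

lemma derivation_diag_Ee0_eq_Ee1: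
  assumes "is_derivation (lset n) lC M"
  shows "M (Ee 0) (Ee 0) = M (Ee 1) (Ee 1)"
proof -
  have "M (Ee 1) (Ee 1) = M (BR 1) (BR 1) + M (Ee 0) (Ee 0)"
    by (rule is_derivation_diag_add[OF finite_lset assms, where a = "- 1"])
       (use n_ge_2 in \<open>simp_all add: lC_Ee[unfolded One_nat_def] lC_Ee_components[unfolded One_nat_def]\<close>)
  moreover have "M (Ee 0) (Ee 0) = M (BR 1) (BR 1) + M (Ee 1) (Ee 1)"
    by (rule is_derivation_diag_add[OF finite_lset assms, where a = "- 1"])
       (use n_ge_2 in \<open>simp_all add: lC_Ee[unfolded One_nat_def] lC_Ee_components[unfolded One_nat_def]\<close>)
  ultimately show ?thesis
    by simp
qed

lemma lG_Ee_orthogonal: "i \<noteq> Ee a \<Longrightarrow> lG \<rho> c i (Ee a) = 0"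
  by (cases i) (auto simp: lG_def)

lemma ricci_curvatures_Ee0_Ee1_differ:
  "ricci (lset n) lC (lG \<rho> c) (bvec (Ee 0)) (bvec (Ee 0)) * lG \<rho> c (Ee 1) (Ee 1)
     \<noteq> ricci (lset n) lC (lG \<rho> c) (bvec (Ee 1)) (bvec (Ee 1)) * lG \<rho> c (Ee 0) (Ee 0)"
  unfolding ricci_Ee0 ricci_Ee1
  using ricci_curvature_products_neq[OF rho_pos c_pos, of "real n - 1"] n_ge_2
  by (simp add: lG_def)

end

theorem theorem4p13:
  fixes n :: nat and \<rho> c :: real
  assumes "n > 1" and "c > 0" and "\<rho> > 0"
  shows "\<not> solvsoliton (lset n) lC (lG \<rho> c)"
proof
  interpret one_loop_deformation n \<rho> c
    using assms by unfold_locales auto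
  assume "solvsoliton (lset n) lC (lG \<rho> c)"
  then have "ricci (lset n) lC (lG \<rho> c) (bvec (Ee 0)) (bvec (Ee 0)) * lG \<rho> c (Ee 1) (Ee 1)
     = ricci (lset n) lC (lG \<rho> c) (bvec (Ee 1)) (bvec (Ee 1)) * lG \<rho> c (Ee 0) (Ee 0)"
    by (rule solvsoliton_ricci_curvature_eq) (use n_ge_2 in \<open>auto simp: lG_Ee_orthogonal derivation_diag_Ee0_eq_Ee1\<close>)
  with ricci_curvatures_Ee0_Ee1_differ show False ..
qed

end
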